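(* For every $\epsilon>0$ there is $\delta>0$ (depending only on $\epsilon$) such that the algorithm ParHAC run with parameter $\delta$ is a $(1+\epsilon)$-approximate average-linkage HAC algorithm: every merge it performs is of an edge whose current average-linkage weight is at least $W_{\max}/(1+\epsilon)$, where $W_{\max}$ is the maximum edge weight in the cluster graph at the time of that merge.
   Context: Setting: an undirected graph $G=(V,E,w)$ with positive edge weights. A partition of $V$ into clusters is maintained (initially singletons), together with the cluster graph $H$ whose vertices are the clusters, with an edge between clusters $X\neq Y$ iff $G$ has an edge between them, of average-linkage weight $\mathcal{W}(X,Y)=\sum_{(x,y)\in E,\,x\in X,\,y\in Y} w(x,y)/(|X||Y|)$. Merging two clusters means replacing them by their union; the size $|X|$ of a vertex of $H$ is the size of its cluster. Algorithm ParHAC$(G,\delta)$: while $H$ has edges, let $W_{\max}$ be the current maximum edge weight of $H$ and run ContractLayer with threshold $T_L=W_{\max}/(1+\delta)$. ContractLayer (one "layer-contraction phase"): while the maximum edge weight of $H$ is at least $T_L$, perform an outer round: color each non-isolated vertex of $H$ red or blue independently with probability $1/2$ each; let $G_c$ consist of the edges of $H$ of weight $\ge T_L$ joining a blue vertex $x$ to a red vertex $y$ with $|y|\ge|x|$. While $G_c$ has edges, perform an inner round: each blue vertex $b$ picks an independent uniform priority $\pi_b\in[0,1]$ and a uniformly random red neighbor $C_b$ in $G_c$ (blue vertices with no red neighbor in $G_c$ do nothing); for each red $r$, order the blue vertices proposing to $r$ by priority and select the shortest prefix whose total cluster size exceeds $\delta|r|$ (all of them if no prefix does); merge every selected blue vertex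 into its red vertex (in the sorted order), updating all edge weights of $H$ and $G_c$ exactly; then remove from $G_c$ every edge with two red endpoints or weight below $T_L$, and remove from $G_c$ every red vertex whose cluster size has grown by more than a factor $(1+\delta)$ since the start of the outer round. An algorithm is $(1+\epsilon)$-approximate if every merge is of an edge with weight at least $1/(1+\epsilon)$ times the maximum edge weight of $H$ at that moment. *)

theory Defs
  imports Complex_Main
begin

text \<open>The weighted graph is given by a weight
  function w; (x,y) is an edge iff w x y > 0 (edge weights positive, non-edges 0).\<close>

type_synonym cluster = "nat set"

definition cw :: "(nat \<Rightarrow> nat \<Rightarrow> real) \<Rightarrow> cluster \<Rightarrow> cluster \<Rightarrow> real" where
  "cw w X Y = (\<Sum>x\<in>X. \<Sum>y\<in>Y. w x y) / (real (card X) * real (card Y))"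

definition cadj :: "(nat \<Rightarrow> nat \<Rightarrow> real) \<Rightarrow> cluster set \<Rightarrow> cluster \<Rightarrow> cluster \<Rightarrow> bool" where
  "cadj w P X Y \<longleftrightarrow> X \<in> P \<and> Y \<in> P \<and> X \<noteq> Y \<and> (\<exists>x\<in>X. \<exists>y\<in>Y. 0 < w x y)"

definition has_edges :: "(nat \<Rightarrow> nat \<Rightarrow> real) \<Rightarrow> cluster set \<Rightarrow> bool" where
  "has_edges w P \<longleftrightarrow> (\<exists>X Y. cadj w P X Y)"

definition wmax :: "(nat \<Rightarrow> nat \<Rightarrow> real) \<Rightarrow> cluster set \<Rightarrow> real" where
  "wmax w P = Max {cw w X Y | X Y. cadj w P X Y}"

definition non_isolated :: "(nat \<Rightarrow> nat \<Rightarrow> real) \<Rightarrow> cluster set \<Rightarrow> cluster set" where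
  "non_isolated w P = {X \<in> P. \<exists>Y. cadj w P X Y}"

definition merge_cl :: "cluster set \<Rightarrow> cluster \<Rightarrow> cluster \<Rightarrow> cluster set" where
  "merge_cl P X Y = insert (X \<union> Y) (P - {X, Y})"

text \<open>Current cluster containing the (initial) red cluster r.\<close>
definition cur :: "cluster set \<Rightarrow> cluster \<Rightarrow> cluster" where
  "cur P r = (THE C. C \<in> P \<and> r \<subseteq> C)"

fun sel_prefix :: "real \<Rightarrow> cluster list \<Rightarrow> cluster list" where
  "sel_prefix t [] = []"
| "sel_prefix t (b # bs) =
     (if real (card b) > t then [b] else b # sel_prefix (t - real (card b)) bs)"

text \<open>Layer T: inside ContractLayer with threshold T, between outer rounds.
  Outer T R Gc: inside an outer round; R = red clusters at the start of the outer
    round (used as identities of red vertices), Gc = edges of G_c as pairs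
    (blue cluster, initial red cluster).
  Merging T R Gc q S: inside the merge step of an inner round; q r = remaining
    selected blue clusters to be merged into red r (in priority order),
    S = all blue clusters selected in this inner round.\<close>
datatype phase =
    Idle
  | Layer real
  | Outer real "cluster set" "(cluster \<times> cluster) set"
  | Merging real "cluster set" "(cluster \<times> cluster) set" "cluster \<Rightarrow> cluster list" "cluster set"

type_synonym config = "cluster set \<times> phase"

text \<open>One step of ParHAC(G, delta); label Some (b, r) means cluster b is merged
  into cluster r.  All random choices (colouring, proposals, priority orders) and
  the order in which the (parallel) merges of different red vertices are
  interleaved are nondeterministic.\<close>
inductive step :: "(nat \<Rightarrow> nat \<Rightarrow> real) \<Rightarrow> real \<Rightarrow> config \<Rightarrow> (cluster \<times> cluster) option \<Rightarrow> config \<Rightarrow> bool"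
  for w :: "nat \<Rightarrow> nat \<Rightarrow> real" and \<delta> :: real where
  start_layer:
    "has_edges w P \<Longrightarrow> step w \<delta> (P, Idle) None (P, Layer (wmax w P / (1 + \<delta>)))"
| start_outer:
    "has_edges w P \<Longrightarrow> T \<le> wmax w P \<Longrightarrow> B \<subseteq> non_isolated w P \<Longrightarrow>
     step w \<delta> (P, Layer T) None
       (P, Outer T (non_isolated w P - B)
              {(x, y). x \<in> B \<and> y \<in> non_isolated w P - B \<and> cadj w P x y \<and>
                       T \<le> cw w x y \<and> card x \<le> card y})"
| end_layer:
    "\<not> (has_edges w P \<and> T \<le> wmax w P) \<Longrightarrow> step w \<delta> (P, Layer T) None (P, Idle)"
| end_outer:
    "step w \<delta> (P, Outer T R {}) None (P, Layer T)"
| start_inner: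
    "Gc \<noteq> {} \<Longrightarrow> Prop \<subseteq> Gc \<Longrightarrow>
     (\<forall>b. (\<exists>r. (b, r) \<in> Gc) \<longrightarrow> (\<exists>!r. (b, r) \<in> Prop)) \<Longrightarrow>
     (\<forall>r. distinct (ord r) \<and> set (ord r) = {b. (b, r) \<in> Prop}) \<Longrightarrow>
     step w \<delta> (P, Outer T R Gc) None
       (P, Merging T R Gc (\<lambda>r. sel_prefix (\<delta> * real (card (cur P r))) (ord r))
             (\<Union>r. set (sel_prefix (\<delta> * real (card (cur P r))) (ord r))))"
| merge:
    "q r = b # bs \<Longrightarrow>
     step w \<delta> (P, Merging T R Gc q S) (Some (b, cur P r))
       (merge_cl P b (cur P r), Merging T R Gc (q(r := bs)) S)"
| end_inner:
    "(\<forall>r. q r = []) \<Longrightarrow>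
     step w \<delta> (P, Merging T R Gc q S) None
       (P, Outer T R {(b, r) \<in> Gc. b \<notin> S \<and> T \<le> cw w b (cur P r) \<and>
                              real (card (cur P r)) \<le> (1 + \<delta>) * real (card r)})"

definition init :: "nat set \<Rightarrow> config" where
  "init V = ((\<lambda>v. {v}) ` V, Idle)"

definition reachable :: "(nat \<Rightarrow> nat \<Rightarrow> real) \<Rightarrow> real \<Rightarrow> nat set \<Rightarrow> config \<Rightarrow> bool" where
  "reachable w \<delta> V c \<longleftrightarrow> (\<lambda>a b. \<exists>l. step w \<delta> a l b)\<^sup>*\<^sup>* (init V) c"

end

theory Submission
  imports Defs "HOL-Library.Disjoint_Sets"
begin

text \<open>Average linkage never raises the largest weight of the cluster graph: the weight from a
  merged cluster X \<union> Y to Z is a convex combination of the weights from X and from Y to Z.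
  Hence throughout a layer with threshold T = W/(1+\<delta>) all weights stay below (1+\<delta>)T.
  A blue cluster b merged into red r had weight at least T to the cluster C0 of r at the start
  of the inner round. Merging further blue clusters into C0 only adds to the total weight between
  b and the red cluster, and the blue clusters merged before b have total size at most \<delta>|C0|;
  so when b is merged, its weight to the red cluster C is at least T|C0|/|C| \<ge> T/(1+\<delta>).
  Every merged edge therefore has weight at least Wmax/(1+\<delta>)^2, and \<delta> = sqrt(1+\<epsilon>) - 1
  gives the claim.\<close>

section \<open>Average-linkage weights\<close>

definition linkage_sum :: "(nat \<Rightarrow> nat \<Rightarrow> real) \<Rightarrow> cluster \<Rightarrow> cluster \<Rightarrow> real" where
  "linkage_sum w X Y = (\<Sum>x\<in>X. \<Sum>y\<in>Y. w x y)"

lemma cw_eq_linkage_sum: "cw w X Y = linkage_sum w X Y / (real (card X) * real (card Y))"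
  unfolding cw_def linkage_sum_def ..

lemma cw_swap: "cw w X Y = cw (\<lambda>x y. w y x) Y X"
  unfolding cw_def by (subst sum.swap) (simp add: mult.commute)

lemma linkage_sum_Un_left:
  "finite X \<Longrightarrow> finite Y \<Longrightarrow> X \<inter> Y = {} \<Longrightarrow>
   linkage_sum w (X \<union> Y) Z = linkage_sum w X Z + linkage_sum w Y Z"
  unfolding linkage_sum_def by (rule sum.union_disjoint)

lemma linkage_sum_mono_right:
  "(\<And>x y. 0 \<le> w x y) \<Longrightarrow> finite Y' \<Longrightarrow> Y \<subseteq> Y' \<Longrightarrow> linkage_sum w X Y \<le> linkage_sum w X Y'"
  unfolding linkage_sum_def by (intro sum_mono sum_mono2) auto

lemma linkage_sum_nonneg: "(\<And>x y. 0 \<le> w x y) \<Longrightarrow> 0 \<le> linkage_sum w X Y"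
  unfolding linkage_sum_def by (simp add: sum_nonneg)

lemma linkage_sum_pos_iff:
  assumes "\<And>x y. 0 \<le> w x y" "finite X" "finite Y"
  shows "0 < linkage_sum w X Y \<longleftrightarrow> (\<exists>x\<in>X. \<exists>y\<in>Y. 0 < w x y)"
proof -
  have "linkage_sum w X Y = 0 \<longleftrightarrow> (\<forall>x\<in>X. \<forall>y\<in>Y. w x y = 0)"
    using assms by (simp add: linkage_sum_def sum_nonneg_eq_0_iff sum_nonneg)
  moreover have "0 \<le> linkage_sum w X Y"
    using assms(1) by (rule linkage_sum_nonneg)
  ultimately show ?thesis
    using assms(1) by (auto simp: order_less_le)
qed

lemma cw_le_iff:
  assumes "finite X" "X \<noteq> {}" "finite Y" "Y \<noteq> {}"
  shows "cw w X Y \<le> M \<longleftrightarrow> linkage_sum w X Y \<le> M * card X * card Y"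
  using assms by (simp add: cw_eq_linkage_sum pos_divide_le_eq card_gt_0_iff mult.assoc)

lemma cw_ge_iff:
  assumes "finite X" "X \<noteq> {}" "finite Y" "Y \<noteq> {}"
  shows "M \<le> cw w X Y \<longleftrightarrow> M * card X * card Y \<le> linkage_sum w X Y"
  using assms by (simp add: cw_eq_linkage_sum pos_le_divide_eq card_gt_0_iff mult.assoc)

lemma cw_Un_left_le:
  assumes "finite X" "X \<noteq> {}" "finite Y" "Y \<noteq> {}" "finite Z" "Z \<noteq> {}" "X \<inter> Y = {}"
    and "cw w X Z \<le> M" "cw w Y Z \<le> M"
  shows "cw w (X \<union> Y) Z \<le> M"
proof -
  have "linkage_sum w X Z \<le> M * card X * card Z" "linkage_sum w Y Z \<le> M * card Y * card Z"
    using assms cw_le_iff by blast+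
  then have "linkage_sum w (X \<union> Y) Z \<le> M * card (X \<union> Y) * card Z"
    using assms by (simp add: linkage_sum_Un_left card_Un_disjoint algebra_simps)
  then show ?thesis
    using assms cw_le_iff[of "X \<union> Y" Z] by simp
qed

lemma cw_Un_right_le:
  assumes "finite X" "X \<noteq> {}" "finite Y" "Y \<noteq> {}" "finite Z" "Z \<noteq> {}" "X \<inter> Y = {}"
    and "cw w Z X \<le> M" "cw w Z Y \<le> M"
  shows "cw w Z (X \<union> Y) \<le> M"
  using cw_Un_left_le[of X Y Z "\<lambda>x y. w y x"] assms by (simp add: cw_swap[of w Z])

lemma cw_ge_divide:
  fixes T g c :: real
  assumes "finite X" "X \<noteq> {}" "finite Y" "Y \<noteq> {}" "0 \<le> T" "0 < g"
    and heavy: "T * card X * c \<le> linkage_sum w X Y" and small: "card Y \<le> g * c"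
  shows "T / g \<le> cw w X Y"
proof -
  have "0 \<le> T / g * card X"
    using assms(5,6) by simp
  with small have "T / g * card X * card Y \<le> T / g * card X * (g * c)"
    by (rule mult_left_mono)
  also have "\<dots> = T * card X * c"
    using assms(6) by (simp add: field_simps)
  finally have "T / g * card X * card Y \<le> linkage_sum w X Y"
    using heavy by linarith
  then show ?thesis
    using cw_ge_iff[OF assms(1-4)] by blast
qed

section \<open>Partitions and the maximum weight\<close>

lemma partition_on_merge_cl:
  "partition_on V P \<Longrightarrow> X \<in> P \<Longrightarrow> Y \<in> P \<Longrightarrow> partition_on V (merge_cl P X Y)"
  by (auto simp: partition_on_def disjoint_def merge_cl_def)

lemma mem_merge_cl: "D \<in> P \<Longrightarrow> D \<noteq> X \<Longrightarrow> D \<noteq> Y \<Longrightarrow> D \<in> merge_cl P X Y"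
  by (simp add: merge_cl_def)

lemma finite_cluster: "finite V \<Longrightarrow> partition_on V P \<Longrightarrow> C \<in> P \<Longrightarrow> finite C"
  by (metis Union_upper finite_subset partition_onD1)

lemma nonempty_cluster: "partition_on V P \<Longrightarrow> C \<in> P \<Longrightarrow> C \<noteq> {}"
  using partition_onD3 by blast

lemma cur_eqI: "partition_on V P \<Longrightarrow> C \<in> P \<Longrightarrow> r \<noteq> {} \<Longrightarrow> r \<subseteq> C \<Longrightarrow> cur P r = C"
  unfolding cur_def partition_on_def disjoint_def by (rule the_equality) blast+

lemma finite_wmax_set: "finite P \<Longrightarrow> finite {cw w X Y | X Y. cadj w P X Y}"
proof -
  assume "finite P"
  then have "finite ((\<lambda>(X, Y). cw w X Y) ` (P \<times> P))"
    by simp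
  moreover have "{cw w X Y | X Y. cadj w P X Y} \<subseteq> (\<lambda>(X, Y). cw w X Y) ` (P \<times> P)"
    unfolding cadj_def by auto
  ultimately show ?thesis
    by (rule finite_subset[rotated])
qed

lemma cw_le_wmax: "finite P \<Longrightarrow> cadj w P X Y \<Longrightarrow> cw w X Y \<le> wmax w P"
  unfolding wmax_def using finite_wmax_set by (intro Max_ge) auto

lemma wmax_le:
  assumes "finite P" "cadj w P X Y" "\<And>X Y. cadj w P X Y \<Longrightarrow> cw w X Y \<le> M"
  shows "wmax w P \<le> M"
  unfolding wmax_def using assms finite_wmax_set[OF assms(1)] by (subst Max_le_iff) auto

definition linkage_bounded :: "(nat \<Rightarrow> nat \<Rightarrow> real) \<Rightarrow> real \<Rightarrow> cluster set \<Rightarrow> bool" where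
  "linkage_bounded w M P \<longleftrightarrow> (\<forall>X\<in>P. \<forall>Y\<in>P. X \<noteq> Y \<longrightarrow> cw w X Y \<le> M)"

lemma linkage_bounded_merge_cl:
  assumes P: "partition_on V P" "finite V" and M: "linkage_bounded w M P"
    and XY: "X \<in> P" "Y \<in> P" "X \<noteq> Y"
  shows "linkage_bounded w M (merge_cl P X Y)"
proof -
  have fin: "finite C" "C \<noteq> {}" if "C \<in> P" for C
    using finite_cluster[OF P(2,1) that] nonempty_cluster[OF P(1) that] by simp_all
  have disj: "X \<inter> Y = {}"
    using P XY by (auto simp: partition_on_def disjoint_def)
  have "cw w (X \<union> Y) Z \<le> M \<and> cw w Z (X \<union> Y) \<le> M" if "Z \<in> P" "Z \<noteq> X" "Z \<noteq> Y" for Z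
    using cw_Un_left_le[of X Y Z] cw_Un_right_le[of X Y Z] fin disj M XY that
    unfolding linkage_bounded_def by metis
  then show ?thesis
    using M unfolding linkage_bounded_def merge_cl_def by auto
qed

section \<open>Queues of blue clusters\<close>

definition size_sum :: "cluster list \<Rightarrow> real" where
  "size_sum bs = (\<Sum>b\<leftarrow>bs. real (card b))"

lemma size_sum_butlast_sel_prefix: "0 \<le> t \<Longrightarrow> size_sum (butlast (sel_prefix t bs)) \<le> t"
proof (induction bs arbitrary: t)
  case (Cons b bs)
  show ?case
  proof (cases "real (card b) > t")
    case False
    then have "size_sum (butlast (sel_prefix (t - card b) bs)) \<le> t - card b"
      using Cons by simp
    with False show ?thesis
      by (cases "sel_prefix (t - card b) bs") (auto simp: size_sum_def)
  qed (use Cons in \<open>simp add: size_sum_def\<close>)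
qed (simp add: size_sum_def)

lemma set_sel_prefix: "set (sel_prefix t bs) \<subseteq> set bs"
  by (induction bs arbitrary: t) auto

lemma distinct_sel_prefix: "distinct bs \<Longrightarrow> distinct (sel_prefix t bs)"
  by (induction bs arbitrary: t) (use set_sel_prefix in fastforce)+

text \<open>The witness c is the size of the red cluster at the start of the inner round: every queued
  blue cluster had average weight at least T to it, and the queued clusters merged before the last
  one enlarge it by at most (g - 1) c.\<close>

definition heavy_queue ::
  "(nat \<Rightarrow> nat \<Rightarrow> real) \<Rightarrow> real \<Rightarrow> real \<Rightarrow> cluster \<Rightarrow> cluster list \<Rightarrow> bool" where
  "heavy_queue w g T C bs \<longleftrightarrow> bs \<noteq> [] \<longrightarrow> (\<exists>c>0.
     (\<forall>b\<in>set bs. T * real (card b) * c \<le> linkage_sum w b C) \<and>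
     real (card C) + size_sum (butlast bs) \<le> g * c)"

lemma heavy_queue_sel_prefix:
  assumes "finite C" "C \<noteq> {}" "0 \<le> \<delta>"
    and heavy: "\<And>b. b \<in> set bs \<Longrightarrow> finite b \<and> b \<noteq> {} \<and> T \<le> cw w b C"
  shows "heavy_queue w (1 + \<delta>) T C (sel_prefix (\<delta> * card C) bs)"
proof -
  have "T * card b * card C \<le> linkage_sum w b C" if "b \<in> set bs" for b
    using heavy[OF that] cw_ge_iff assms(1,2) by blast
  moreover have "card C + size_sum (butlast (sel_prefix (\<delta> * card C) bs)) \<le> (1 + \<delta>) * card C"
    using size_sum_butlast_sel_prefix[of "\<delta> * card C"] assms(3) by (simp add: algebra_simps)
  moreover have "0 < real (card C)"
    using assms(1,2) by (simp add: card_gt_0_iff)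
  ultimately show ?thesis
    unfolding heavy_queue_def using set_sel_prefix by blast
qed

lemma heavy_queue_merge_head:
  assumes "\<And>x y. 0 \<le> w x y" "heavy_queue w g T C (b # bs)" "finite b" "finite C" "b \<inter> C = {}"
  shows "heavy_queue w g T (b \<union> C) bs"
proof (cases "bs = []")
  case False
  obtain c where "c > 0" and heavy: "\<forall>b'\<in>set (b # bs). T * real (card b') * c \<le> linkage_sum w b' C"
    and small: "real (card C) + size_sum (butlast (b # bs)) \<le> g * c"
    using assms(2) unfolding heavy_queue_def by auto
  have "T * real (card b') * c \<le> linkage_sum w b' (b \<union> C)" if "b' \<in> set bs" for b'
  proof -
    have "linkage_sum w b' C \<le> linkage_sum w b' (b \<union> C)"
      by (rule linkage_sum_mono_right) (use assms(1,3,4) in auto)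
    moreover have "T * real (card b') * c \<le> linkage_sum w b' C"
      using heavy that by simp
    ultimately show ?thesis
      by linarith
  qed
  moreover have "real (card (b \<union> C)) + size_sum (butlast bs) \<le> g * c"
  proof -
    have "size_sum (butlast (b # bs)) = real (card b) + size_sum (butlast bs)"
      using False by (simp add: size_sum_def)
    moreover have "card (b \<union> C) = card b + card C"
      using assms(3-5) by (simp add: card_Un_disjoint)
    ultimately show ?thesis
      using small by simp
  qed
  ultimately show ?thesis
    unfolding heavy_queue_def using \<open>c > 0\<close> by blast
qed (simp add: heavy_queue_def)

lemma heavy_queue_head_cw:
  assumes "heavy_queue w g T C (b # bs)" "0 \<le> T" "0 < g"
    and "finite b" "b \<noteq> {}" "finite C" "C \<noteq> {}"
  shows "T / g \<le> cw w b C"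
proof -
  obtain c where heavy: "T * real (card b) * c \<le> linkage_sum w b C"
    and small: "real (card C) + size_sum (butlast (b # bs)) \<le> g * c"
    using assms(1) unfolding heavy_queue_def by auto
  have "0 \<le> size_sum (butlast (b # bs))"
    unfolding size_sum_def by (rule sum_list_nonneg) auto
  with small have "real (card C) \<le> g * c"
    by linarith
  then show ?thesis
    by (rule cw_ge_divide[OF assms(4-7,2,3) heavy])
qed

section \<open>Red clusters across merges\<close>

definition red_tracked :: "cluster set \<Rightarrow> cluster set \<Rightarrow> bool" where
  "red_tracked P R \<longleftrightarrow> (\<forall>r\<in>R. r \<noteq> {} \<and> (\<exists>C\<in>P. r \<subseteq> C)) \<and>
     (\<forall>C\<in>P. \<forall>r\<in>R. \<forall>r'\<in>R. r \<subseteq> C \<longrightarrow> r' \<subseteq> C \<longrightarrow> r = r')"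

lemma red_trackedD:
  assumes "red_tracked P R" "r \<in> R"
  shows "r \<noteq> {}" "\<exists>C\<in>P. r \<subseteq> C"
  using assms unfolding red_tracked_def by auto

lemma red_tracked_unique:
  "red_tracked P R \<Longrightarrow> C \<in> P \<Longrightarrow> r \<in> R \<Longrightarrow> r' \<in> R \<Longrightarrow> r \<subseteq> C \<Longrightarrow> r' \<subseteq> C \<Longrightarrow> r = r'"
  unfolding red_tracked_def by blast

lemma cur_red:
  assumes P: "partition_on V P" and "red_tracked P R" "r \<in> R"
  shows "cur P r \<in> P" "r \<subseteq> cur P r"
proof -
  obtain C where "C \<in> P" "r \<subseteq> C"
    using red_trackedD(2)[OF assms(2,3)] by blast
  moreover from this have "cur P r = C"
    using cur_eqI[OF P _ red_trackedD(1)[OF assms(2,3)]] by blast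
  ultimately show "cur P r \<in> P" "r \<subseteq> cur P r"
    by simp_all
qed

lemma cur_red_inj:
  assumes P: "partition_on V P" "red_tracked P R" and r: "r \<in> R" "r' \<in> R"
    and eq: "cur P r = cur P r'"
  shows "r = r'"
  using red_tracked_unique[OF P(2) cur_red(1)[OF P r(1)] r] cur_red(2)[OF P r(1)]
    cur_red(2)[OF P r(2)] eq by simp

lemma red_tracked_merge_cl:
  assumes R: "red_tracked P R" and "C \<in> P" "b \<inter> \<Union>R = {}"
  shows "red_tracked (merge_cl P b C) R"
proof -
  have "\<exists>D\<in>merge_cl P b C. r \<subseteq> D" if r: "r \<in> R" for r
  proof -
    obtain D where "D \<in> P" "r \<subseteq> D"
      using red_trackedD(2)[OF R r] by blast
    then show ?thesis
      by (cases "D = b \<or> D = C") (auto simp: merge_cl_def)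
  qed
  moreover have "r = r'"
    if D: "D \<in> merge_cl P b C" and r: "r \<in> R" "r' \<in> R" "r \<subseteq> D" "r' \<subseteq> D" for D r r'
  proof (cases "D = b \<union> C")
    case True
    then have "r \<subseteq> C" "r' \<subseteq> C"
      using r assms(3) by blast+
    then show ?thesis
      by (rule red_tracked_unique[OF R assms(2) r(1,2)])
  next
    case False
    then have "D \<in> P"
      using D by (simp add: merge_cl_def)
    then show ?thesis
      using red_tracked_unique[OF R _ r] by blast
  qed
  ultimately show ?thesis
    using red_trackedD(1)[OF R] unfolding red_tracked_def by blast
qed

lemma cur_merge_cl:
  assumes P: "partition_on V P" "red_tracked P R" and r: "r \<in> R"
    and b: "b \<in> P" "C \<in> P" "b \<inter> \<Union>R = {}"
  shows "cur (merge_cl P b C) r = (if cur P r = C then b \<union> C else cur P r)"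
proof -
  have part: "partition_on V (merge_cl P b C)"
    by (rule partition_on_merge_cl[OF P(1) b(1,2)])
  have "r \<noteq> {}"
    using red_trackedD(1)[OF P(2) r] .
  show ?thesis
  proof (cases "cur P r = C")
    case True
    have "cur (merge_cl P b C) r = b \<union> C"
      by (rule cur_eqI[OF part _ \<open>r \<noteq> {}\<close>])
        (use True cur_red(2)[OF P r] in \<open>auto simp: merge_cl_def\<close>)
    with True show ?thesis
      by simp
  next
    case False
    have "r \<subseteq> cur P r" "cur P r \<in> P"
      using cur_red[OF P r] by simp_all
    moreover have "cur P r \<noteq> b"
      using \<open>r \<subseteq> cur P r\<close> b(3) r \<open>r \<noteq> {}\<close> by blast
    ultimately have "cur (merge_cl P b C) r = cur P r"
      using False by (intro cur_eqI[OF part _ \<open>r \<noteq> {}\<close>]) (simp_all add: mem_merge_cl)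
    with False show ?thesis
      by simp
  qed
qed

section \<open>The invariant of ParHAC\<close>

lemma step_SomeE:
  assumes "step w \<delta> c (Some (X, Y)) c'"
  obtains P T R Gc q S r bs where "c = (P, Merging T R Gc q S)" "q r = X # bs" "Y = cur P r"
  using assms by (cases rule: step.cases) auto

locale parhac_run =
  fixes w :: "nat \<Rightarrow> nat \<Rightarrow> real" and \<delta> :: real and V :: "nat set"
  assumes w_nonneg: "0 \<le> w x y" and delta_pos: "0 < \<delta>" and finite_V: "finite V"
begin

lemma wmax_bounds:
  assumes P: "partition_on V P" and "has_edges w P"
  shows "0 < wmax w P" "linkage_bounded w (wmax w P) P"
proof -
  obtain X Y where XY: "cadj w P X Y"
    using assms(2) unfolding has_edges_def by blast
  have finP: "finite P"
    using finite_elements[OF finite_V P] .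
  have fin: "finite C" "C \<noteq> {}" if "C \<in> P" for C
    using finite_cluster[OF finite_V P that] nonempty_cluster[OF P that] by simp_all
  have "0 < cw w X Y"
    using XY fin linkage_sum_pos_iff[of w X Y, OF w_nonneg]
    unfolding cadj_def cw_eq_linkage_sum by (auto simp: card_gt_0_iff)
  then show pos: "0 < wmax w P"
    using cw_le_wmax[OF finP XY] by linarith
  have "cw w X' Y' \<le> wmax w P" if "X' \<in> P" "Y' \<in> P" "X' \<noteq> Y'" for X' Y'
  proof (cases "cadj w P X' Y'")
    case True
    then show ?thesis
      by (rule cw_le_wmax[OF finP])
  next
    case False
    then have "\<not> 0 < linkage_sum w X' Y'"
      using that fin linkage_sum_pos_iff[of w X' Y', OF w_nonneg] unfolding cadj_def by simp
    then have "linkage_sum w X' Y' = 0"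
      using linkage_sum_nonneg[of w, OF w_nonneg] by (meson order_antisym not_less)
    with pos show ?thesis
      by (simp add: cw_eq_linkage_sum)
  qed
  then show "linkage_bounded w (wmax w P) P"
    unfolding linkage_bounded_def by blast
qed

text \<open>The invariant consists of the weight bound (1 + \<delta>) T, valid throughout a layer, and the heavy
  queues; everything else is bookkeeping that keeps blue clusters, red clusters and queues apart.\<close>

fun parhac_inv :: "config \<Rightarrow> bool" where
  "parhac_inv (P, Idle) \<longleftrightarrow> partition_on V P"
| "parhac_inv (P, Layer T) \<longleftrightarrow>
     partition_on V P \<and> 0 < T \<and> linkage_bounded w ((1 + \<delta>) * T) P"
| "parhac_inv (P, Outer T R Gc) \<longleftrightarrow>
     partition_on V P \<and> 0 < T \<and> linkage_bounded w ((1 + \<delta>) * T) P \<and> red_tracked P R \<and>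
     (\<forall>(b, r)\<in>Gc. r \<in> R \<and> b \<in> P \<and> b \<inter> \<Union>R = {} \<and> T \<le> cw w b (cur P r))"
| "parhac_inv (P, Merging T R Gc q S) \<longleftrightarrow>
     partition_on V P \<and> 0 < T \<and> linkage_bounded w ((1 + \<delta>) * T) P \<and> red_tracked P R \<and>
     (\<forall>(b, r)\<in>Gc. r \<in> R \<and> b \<inter> \<Union>R = {} \<and> (b \<notin> S \<longrightarrow> b \<in> P)) \<and>
     (\<forall>r. \<forall>b\<in>set (q r). r \<in> R \<and> b \<in> P \<and> b \<inter> \<Union>R = {} \<and> b \<in> S) \<and>
     (\<forall>r. distinct (q r)) \<and> (\<forall>r r'. r \<noteq> r' \<longrightarrow> set (q r) \<inter> set (q r') = {}) \<and>
     (\<forall>r. heavy_queue w (1 + \<delta>) T (cur P r) (q r))"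

lemma merge_head_facts:
  assumes I: "parhac_inv (P, Merging T R Gc q S)" and qr: "q r = b # bs"
  shows "r \<in> R" "b \<in> P" "b \<inter> \<Union>R = {}" "b \<in> S" "cur P r \<in> P" "r \<subseteq> cur P r" "r \<noteq> {}"
    "b \<inter> cur P r = {}"
proof -
  have part: "partition_on V P" and tracked: "red_tracked P R"
    using I by simp_all
  have "\<forall>r. \<forall>b\<in>set (q r). r \<in> R \<and> b \<in> P \<and> b \<inter> \<Union>R = {} \<and> b \<in> S"
    using I by simp
  moreover have "b \<in> set (q r)"
    using qr by simp
  ultimately show r: "r \<in> R" and b: "b \<in> P" "b \<inter> \<Union>R = {}" "b \<in> S"
    by blast+
  show C: "cur P r \<in> P" "r \<subseteq> cur P r"
    using cur_red[OF part tracked r] by simp_all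
  show "r \<noteq> {}"
    using red_trackedD(1)[OF tracked r] .
  then have "b \<noteq> cur P r"
    using b(2) C(2) r by blast
  with b(1) C(1) show "b \<inter> cur P r = {}"
    using partition_onD2[OF part] unfolding disjoint_def by blast
qed

lemma merge_is_heavy:
  assumes I: "parhac_inv (P, Merging T R Gc q S)" and qr: "q r = b # bs"
  shows "cadj w P b (cur P r)" "T / (1 + \<delta>) \<le> cw w b (cur P r)" "wmax w P \<le> (1 + \<delta>) * T"
proof -
  define C where "C = cur P r"
  have part: "partition_on V P" and "0 < T" and bounded: "linkage_bounded w ((1 + \<delta>) * T) P"
    and "\<forall>r. heavy_queue w (1 + \<delta>) T (cur P r) (q r)"
    using I by simp_all
  then have heavy: "heavy_queue w (1 + \<delta>) T C (b # bs)"
    unfolding C_def qr[symmetric] by blast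
  note facts = merge_head_facts[OF I qr, folded C_def]
  have fin: "finite b" "b \<noteq> {}" "finite C" "C \<noteq> {}"
    using facts(2,5) finite_cluster[OF finite_V part] nonempty_cluster[OF part] by blast+
  show heavy_cw: "T / (1 + \<delta>) \<le> cw w b C"
    using heavy_queue_head_cw[OF heavy] \<open>0 < T\<close> delta_pos fin by simp
  moreover have "0 < T / (1 + \<delta>)"
    using \<open>0 < T\<close> delta_pos by simp
  ultimately have "0 < cw w b C"
    by linarith
  then have "linkage_sum w b C \<noteq> 0"
    unfolding cw_eq_linkage_sum by auto
  then have "0 < linkage_sum w b C"
    using linkage_sum_nonneg[of w, OF w_nonneg] by (simp add: order_less_le)
  moreover have "b \<noteq> C"
    using facts(8) fin(2) by blast
  ultimately show adj: "cadj w P b C"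
    using facts(2,5) fin linkage_sum_pos_iff[of w b C, OF w_nonneg] unfolding cadj_def by blast
  have "cw w X Y \<le> (1 + \<delta>) * T" if "cadj w P X Y" for X Y
    using bounded that unfolding linkage_bounded_def cadj_def by blast
  then show "wmax w P \<le> (1 + \<delta>) * T"
    by (rule wmax_le[OF finite_elements[OF finite_V part] adj])
qed

lemma heavy_queues_merge:
  assumes I: "parhac_inv (P, Merging T R Gc q S)" and qr: "q r = b # bs"
  shows "heavy_queue w (1 + \<delta>) T (cur (merge_cl P b (cur P r)) r') ((q(r := bs)) r')"
proof -
  define C where "C = cur P r"
  have part: "partition_on V P" and tracked: "red_tracked P R"
    and queued: "\<forall>r. \<forall>b\<in>set (q r). r \<in> R \<and> b \<in> P \<and> b \<inter> \<Union>R = {} \<and> b \<in> S"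
    and heavy: "\<forall>r. heavy_queue w (1 + \<delta>) T (cur P r) (q r)"
    using I by simp_all
  note facts = merge_head_facts[OF I qr, folded C_def]
  have cur_merged: "cur (merge_cl P b C) r' = (if cur P r' = C then b \<union> C else cur P r')"
    if "r' \<in> R" for r'
    using cur_merge_cl[OF part tracked that facts(2,5,3)] .
  show ?thesis
  proof (cases "r' = r")
    case True
    have "finite b" "finite C"
      using facts(2,5) finite_cluster[OF finite_V part] by blast+
    moreover have "heavy_queue w (1 + \<delta>) T C (b # bs)"
      using heavy qr unfolding C_def by metis
    ultimately have "heavy_queue w (1 + \<delta>) T (b \<union> C) bs"
      using heavy_queue_merge_head[of w, OF w_nonneg] facts(8) by blast
    with True show ?thesis
      using cur_merged[OF facts(1)] unfolding C_def by simp
  next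
    case False
    show ?thesis
    proof (cases "q r' = []")
      case False
      then obtain b' where "b' \<in> set (q r')"
        by (cases "q r'") auto
      then have "r' \<in> R"
        using queued by blast
      then have "cur P r' \<noteq> C"
        using cur_red_inj[OF part tracked _ facts(1)] \<open>r' \<noteq> r\<close> unfolding C_def by blast
      then show ?thesis
        using heavy cur_merged[OF \<open>r' \<in> R\<close>] \<open>r' \<noteq> r\<close> unfolding C_def by simp
    qed (simp add: heavy_queue_def \<open>r' \<noteq> r\<close>)
  qed
qed

lemma blue_stays_after_merge:
  assumes I: "parhac_inv (P, Merging T R Gc q S)" and qr: "q r = b # bs"
    and D: "D \<in> P" "D \<noteq> b" "D \<inter> \<Union>R = {}"
  shows "D \<in> merge_cl P b (cur P r)"
proof -
  \<comment> \<open>cur P r contains the nonempty red cluster r\<close>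
  have "D \<noteq> cur P r"
    using D(3) merge_head_facts(1,6,7)[OF I qr] by blast
  with D(1,2) show ?thesis
    by (simp add: mem_merge_cl)
qed

lemma set_queue_merge:
  assumes I: "parhac_inv (P, Merging T R Gc q S)" and qr: "q r = b # bs"
  shows "set ((q(r := bs)) r') \<subseteq> set (q r') - {b}"
proof -
  have dist: "\<forall>r. distinct (q r)" and disj: "\<forall>r r'. r \<noteq> r' \<longrightarrow> set (q r) \<inter> set (q r') = {}"
    using I by simp_all
  show ?thesis
  proof (cases "r' = r")
    case True
    then show ?thesis
      using spec[OF dist, of r] qr by auto
  next
    case False
    then have "set (q r') \<inter> set (q r) = {}"
      using disj by blast
    with False qr show ?thesis
      by auto
  qed
qed

lemma parhac_inv_merge:
  assumes I: "parhac_inv (P, Merging T R Gc q S)" and qr: "q r = b # bs"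
  shows "parhac_inv (merge_cl P b (cur P r), Merging T R Gc (q(r := bs)) S)"
proof -
  define C where "C = cur P r"
  define P' where "P' = merge_cl P b C"
  have part: "partition_on V P" and "0 < T" and tracked: "red_tracked P R"
    and bounded: "linkage_bounded w ((1 + \<delta>) * T) P"
    and gc: "\<forall>(b', r')\<in>Gc. r' \<in> R \<and> b' \<inter> \<Union>R = {} \<and> (b' \<notin> S \<longrightarrow> b' \<in> P)"
    and queued: "\<forall>r. \<forall>b\<in>set (q r). r \<in> R \<and> b \<in> P \<and> b \<inter> \<Union>R = {} \<and> b \<in> S"
    and dist: "\<forall>r. distinct (q r)" and disj: "\<forall>r r'. r \<noteq> r' \<longrightarrow> set (q r) \<inter> set (q r') = {}"
    using I by simp_all
  note facts = merge_head_facts[OF I qr, folded C_def]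
  note stays = blue_stays_after_merge[OF I qr, folded C_def, folded P'_def]
  note shrinks = set_queue_merge[OF I qr]
  have "b \<noteq> C"
    using facts(8) nonempty_cluster[OF part facts(2)] by blast
  then have "linkage_bounded w ((1 + \<delta>) * T) P'"
    unfolding P'_def by (rule linkage_bounded_merge_cl[OF part finite_V bounded facts(2,5)])
  moreover have "partition_on V P'"
    unfolding P'_def by (rule partition_on_merge_cl[OF part facts(2,5)])
  moreover have "red_tracked P' R"
    unfolding P'_def by (rule red_tracked_merge_cl[OF tracked facts(5,3)])
  moreover have "r' \<in> R \<and> b' \<inter> \<Union>R = {} \<and> (b' \<notin> S \<longrightarrow> b' \<in> P')" if "(b', r') \<in> Gc" for b' r'
    using bspec[OF gc that] stays facts(4) by auto
  then have "\<forall>(b', r')\<in>Gc. r' \<in> R \<and> b' \<inter> \<Union>R = {} \<and> (b' \<notin> S \<longrightarrow> b' \<in> P')"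
    by blast
  moreover have "r' \<in> R \<and> b' \<in> P' \<and> b' \<inter> \<Union>R = {} \<and> b' \<in> S"
    if "b' \<in> set ((q(r := bs)) r')" for r' b'
  proof -
    have "b' \<in> set (q r')" "b' \<noteq> b"
      using that shrinks[of r'] by blast+
    moreover from this(1) have "r' \<in> R \<and> b' \<in> P \<and> b' \<inter> \<Union>R = {} \<and> b' \<in> S"
      using queued by blast
    ultimately show ?thesis
      using stays by blast
  qed
  moreover have "distinct ((q(r := bs)) r')" for r'
    using spec[OF dist, of r'] spec[OF dist, of r] qr by simp
  moreover have "set ((q(r := bs)) r1) \<inter> set ((q(r := bs)) r2) = {}" if "r1 \<noteq> r2" for r1 r2
    using disj that shrinks[of r1] shrinks[of r2] by blast
  moreover have "heavy_queue w (1 + \<delta>) T (cur P' r') ((q(r := bs)) r')" for r'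
    using heavy_queues_merge[OF I qr] unfolding P'_def C_def .
  ultimately show ?thesis
    using \<open>0 < T\<close> unfolding parhac_inv.simps P'_def C_def by blast
qed

lemma parhac_inv_start_outer:
  assumes I: "parhac_inv (P, Layer T)" and B: "B \<subseteq> non_isolated w P"
  defines "R \<equiv> non_isolated w P - B"
  shows "parhac_inv (P, Outer T R
           {(x, y). x \<in> B \<and> y \<in> R \<and> cadj w P x y \<and> T \<le> cw w x y \<and> card x \<le> card y})"
proof -
  have part: "partition_on V P" and "0 < T" and bounded: "linkage_bounded w ((1 + \<delta>) * T) P"
    using I by simp_all
  have RB: "R \<subseteq> P" "B \<subseteq> P" "R \<inter> B = {}"
    using B unfolding R_def non_isolated_def by auto
  have red_eq: "r = C" if "r \<in> R" "C \<in> P" "r \<subseteq> C" for r C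
  proof (rule ccontr)
    assume "r \<noteq> C"
    then have "r \<inter> C = {}"
      using disjointD[OF partition_onD2[OF part]] RB(1) that(1,2) by blast
    with that(3) show False
      using nonempty_cluster[OF part] RB(1) that(1) by blast
  qed
  have "r \<noteq> {} \<and> (\<exists>C\<in>P. r \<subseteq> C)" if "r \<in> R" for r
    using that RB(1) nonempty_cluster[OF part] by blast
  moreover have "r = r'" if "C \<in> P" "r \<in> R" "r' \<in> R" "r \<subseteq> C" "r' \<subseteq> C" for C r r'
    using red_eq[OF that(2,1,4)] red_eq[OF that(3,1,5)] by simp
  ultimately have tracked: "red_tracked P R"
    unfolding red_tracked_def by blast
  have "b \<inter> r = {}" if "b \<in> B" "r \<in> R" for b r
    using disjointD[OF partition_onD2[OF part]] RB that by blast
  then have blue: "b \<inter> \<Union>R = {}" if "b \<in> B" for b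
    using that by blast
  have "cur P r = r" if "r \<in> R" for r
    using that RB(1) nonempty_cluster[OF part] by (intro cur_eqI[OF part]) auto
  then have "r \<in> R \<and> b \<in> P \<and> b \<inter> \<Union>R = {} \<and> T \<le> cw w b (cur P r)"
    if "b \<in> B" "r \<in> R" "T \<le> cw w b r" for b r
    using that RB(2) blue by auto
  then have "\<forall>(b, r)\<in>{(x, y). x \<in> B \<and> y \<in> R \<and> cadj w P x y \<and> T \<le> cw w x y \<and> card x \<le> card y}.
      r \<in> R \<and> b \<in> P \<and> b \<inter> \<Union>R = {} \<and> T \<le> cw w b (cur P r)"
    by blast
  with part \<open>0 < T\<close> bounded tracked show ?thesis
    unfolding parhac_inv.simps by blast
qed

lemma parhac_inv_start_inner:
  assumes I: "parhac_inv (P, Outer T R Gc)" and sub: "Prop \<subseteq> Gc"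
    and unique: "\<forall>b. (\<exists>r. (b, r) \<in> Gc) \<longrightarrow> (\<exists>!r. (b, r) \<in> Prop)"
    and ord: "\<forall>r. distinct (ord r) \<and> set (ord r) = {b. (b, r) \<in> Prop}"
  defines "q \<equiv> \<lambda>r. sel_prefix (\<delta> * real (card (cur P r))) (ord r)"
  shows "parhac_inv (P, Merging T R Gc q (\<Union>r. set (q r)))"
proof -
  define S where "S = (\<Union>r. set (q r))"
  have part: "partition_on V P" and "0 < T" and bounded: "linkage_bounded w ((1 + \<delta>) * T) P"
    and tracked: "red_tracked P R"
    and gc: "\<forall>(b, r)\<in>Gc. r \<in> R \<and> b \<in> P \<and> b \<inter> \<Union>R = {} \<and> T \<le> cw w b (cur P r)"
    using I by simp_all
  have proposed: "r \<in> R \<and> b \<in> P \<and> b \<inter> \<Union>R = {} \<and> T \<le> cw w b (cur P r)"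
    if "b \<in> set (ord r)" for b r
  proof -
    have "(b, r) \<in> Gc"
      using ord sub that by blast
    then show ?thesis
      using bspec[OF gc] by fastforce
  qed
  have queue_sub: "set (q r) \<subseteq> set (ord r)" for r
    unfolding q_def by (rule set_sel_prefix)
  have "r \<in> R \<and> b \<inter> \<Union>R = {} \<and> (b \<notin> S \<longrightarrow> b \<in> P)" if "(b, r) \<in> Gc" for b r
    using bspec[OF gc that] by simp
  then have "\<forall>(b, r)\<in>Gc. r \<in> R \<and> b \<inter> \<Union>R = {} \<and> (b \<notin> S \<longrightarrow> b \<in> P)"
    by blast
  moreover have "r \<in> R \<and> b \<in> P \<and> b \<inter> \<Union>R = {} \<and> b \<in> S" if "b \<in> set (q r)" for b r
    using proposed queue_sub that unfolding S_def by blast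
  moreover have "distinct (q r)" for r
    unfolding q_def using ord distinct_sel_prefix by blast
  moreover have "set (q r) \<inter> set (q r') = {}" if "r \<noteq> r'" for r r'
  proof -
    have "(b, r) \<in> Prop \<and> (b, r') \<in> Prop \<longrightarrow> False" for b
      using unique sub that by blast
    then show ?thesis
      using queue_sub[of r] queue_sub[of r'] ord by blast
  qed
  moreover have "heavy_queue w (1 + \<delta>) T (cur P r) (q r)" for r
  proof (cases "ord r = []")
    case False
    then obtain b where "b \<in> set (ord r)"
      by (cases "ord r") auto
    then have "cur P r \<in> P"
      using proposed cur_red[OF part tracked] by blast
    then have "finite (cur P r)" "cur P r \<noteq> {}"
      using finite_cluster[OF finite_V part] nonempty_cluster[OF part] by blast+
    moreover have "finite b \<and> b \<noteq> {} \<and> T \<le> cw w b (cur P r)" if "b \<in> set (ord r)" for b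
      using proposed[OF that] finite_cluster[OF finite_V part] nonempty_cluster[OF part] by blast
    ultimately show ?thesis
      unfolding q_def using heavy_queue_sel_prefix delta_pos by simp
  qed (simp add: q_def heavy_queue_def)
  ultimately show ?thesis
    using part \<open>0 < T\<close> bounded tracked unfolding parhac_inv.simps S_def by blast
qed

lemma parhac_inv_end_inner:
  assumes I: "parhac_inv (P, Merging T R Gc q S)"
  shows "parhac_inv (P, Outer T R {(b, r) \<in> Gc. b \<notin> S \<and> T \<le> cw w b (cur P r) \<and>
                                        real (card (cur P r)) \<le> (1 + \<delta>) * real (card r)})"
proof -
  have part: "partition_on V P" and "0 < T" and bounded: "linkage_bounded w ((1 + \<delta>) * T) P"
    and tracked: "red_tracked P R"
    and gc: "\<forall>(b, r)\<in>Gc. r \<in> R \<and> b \<inter> \<Union>R = {} \<and> (b \<notin> S \<longrightarrow> b \<in> P)"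
    using I by simp_all
  have "r \<in> R \<and> b \<in> P \<and> b \<inter> \<Union>R = {} \<and> T \<le> cw w b (cur P r)"
    if "(b, r) \<in> Gc" "b \<notin> S" "T \<le> cw w b (cur P r)" for b r
    using bspec[OF gc that(1)] that(2,3) by simp
  then have "\<forall>(b, r)\<in>{(b, r) \<in> Gc. b \<notin> S \<and> T \<le> cw w b (cur P r) \<and>
                                        real (card (cur P r)) \<le> (1 + \<delta>) * real (card r)}.
      r \<in> R \<and> b \<in> P \<and> b \<inter> \<Union>R = {} \<and> T \<le> cw w b (cur P r)"
    by blast
  with part \<open>0 < T\<close> bounded tracked show ?thesis
    by simp
qed

lemma parhac_inv_step:
  assumes I: "parhac_inv c" and "step w \<delta> c l c'"
  shows "parhac_inv c'"
  using assms(2)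
proof cases
  case (start_layer P)
  then have part: "partition_on V P"
    using I by simp
  have "(1 + \<delta>) * (wmax w P / (1 + \<delta>)) = wmax w P"
    using delta_pos by simp
  then show ?thesis
    using wmax_bounds[OF part \<open>has_edges w P\<close>] delta_pos part start_layer(3) by simp
next
  case (start_outer P T B)
  have "parhac_inv (P, Layer T)"
    using I start_outer(1) by simp
  from parhac_inv_start_outer[OF this start_outer(6)] show ?thesis
    unfolding start_outer(3) .
next
  case (start_inner Gc Prop ord P T R)
  have "parhac_inv (P, Outer T R Gc)"
    using I start_inner(1) by simp
  from parhac_inv_start_inner[OF this start_inner(5-7)] show ?thesis
    unfolding start_inner(3) .
next
  case (merge q r b bs P T R Gc S)
  have "parhac_inv (P, Merging T R Gc q S)"
    using I merge(1) by simp
  from parhac_inv_merge[OF this merge(4)] show ?thesis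
    unfolding merge(3) .
next
  case (end_inner q P T R Gc S)
  have "parhac_inv (P, Merging T R Gc q S)"
    using I end_inner(1) by simp
  from parhac_inv_end_inner[OF this] show ?thesis
    unfolding end_inner(3) .
qed (use I in simp_all)

lemma parhac_inv_reachable:
  assumes "reachable w \<delta> V c"
  shows "parhac_inv c"
proof -
  have "(\<lambda>a b. \<exists>l. step w \<delta> a l b)\<^sup>*\<^sup>* (init V) c"
    using assms unfolding reachable_def .
  then show ?thesis
  proof (induction rule: rtranclp_induct)
    case base
    show ?case
      by (simp add: init_def partition_on_singletons)
  next
    case (step c c')
    then show ?case
      using parhac_inv_step by blast
  qed
qed

lemma reachable_merge_approx:
  assumes "reachable w \<delta> V c" "step w \<delta> c (Some (X, Y)) c'"
  shows "cadj w (fst c) X Y" "wmax w (fst c) \<le> (1 + \<delta>)\<^sup>2 * cw w X Y"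
proof -
  obtain P T R Gc q S r bs where c: "c = (P, Merging T R Gc q S)" and qr: "q r = X # bs"
    and Y: "Y = cur P r"
    using assms(2) by (rule step_SomeE)
  have I: "parhac_inv (P, Merging T R Gc q S)"
    using parhac_inv_reachable[OF assms(1)] c by simp
  show "cadj w (fst c) X Y"
    using merge_is_heavy(1)[OF I qr] c Y by simp
  have "wmax w P \<le> (1 + \<delta>) * T"
    by (rule merge_is_heavy(3)[OF I qr])
  also have "\<dots> = (1 + \<delta>)\<^sup>2 * (T / (1 + \<delta>))"
    using delta_pos by (simp add: power2_eq_square)
  also have "\<dots> \<le> (1 + \<delta>)\<^sup>2 * cw w X Y"
    using merge_is_heavy(2)[OF I qr] Y by (intro mult_left_mono) simp_all
  finally show "wmax w (fst c) \<le> (1 + \<delta>)\<^sup>2 * cw w X Y"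
    using c by simp
qed

end

theorem mainTheorem4:
  shows "\<forall>\<epsilon>::real. \<epsilon> > 0 \<longrightarrow> (\<exists>\<delta>::real. \<delta> > 0 \<and>
     (\<forall>(V::nat set) (w::nat \<Rightarrow> nat \<Rightarrow> real).
        finite V \<and> (\<forall>x y. 0 \<le> w x y) \<and> (\<forall>x y. w x y = w y x) \<and> (\<forall>x. w x x = 0) \<longrightarrow>
        (\<forall>c X Y c'. reachable w \<delta> V c \<and> step w \<delta> c (Some (X, Y)) c' \<longrightarrow>
           cadj w (fst c) X Y \<and> wmax w (fst c) / (1 + \<epsilon>) \<le> cw w X Y)))"
proof (intro allI impI)
  fix \<epsilon> :: real
  assume "\<epsilon> > 0"
  define \<delta> where "\<delta> = sqrt (1 + \<epsilon>) - 1"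
  have "0 < \<delta>"
    using \<open>\<epsilon> > 0\<close> by (simp add: \<delta>_def real_less_rsqrt)
  have square: "(1 + \<delta>)\<^sup>2 = 1 + \<epsilon>"
    using \<open>\<epsilon> > 0\<close> by (simp add: \<delta>_def)
  have "cadj w (fst c) X Y \<and> wmax w (fst c) / (1 + \<epsilon>) \<le> cw w X Y"
    if "finite V" "\<forall>x y. 0 \<le> w x y" "reachable w \<delta> V c" "step w \<delta> c (Some (X, Y)) c'"
    for V w c X Y c'
  proof -
    interpret parhac_run w \<delta> V
      using that(1,2) \<open>0 < \<delta>\<close> by unfold_locales auto
    show ?thesis
      using reachable_merge_approx[OF that(3,4)] square \<open>\<epsilon> > 0\<close>
      by (simp add: pos_divide_le_eq mult.commute)
  qed
  with \<open>0 < \<delta>\<close> show "\<exists>\<delta>::real. \<delta> > 0 \<and>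
     (\<forall>(V::nat set) (w::nat \<Rightarrow> nat \<Rightarrow> real).
        finite V \<and> (\<forall>x y. 0 \<le> w x y) \<and> (\<forall>x y. w x y = w y x) \<and> (\<forall>x. w x x = 0) \<longrightarrow>
        (\<forall>c X Y c'. reachable w \<delta> V c \<and> step w \<delta> c (Some (X, Y)) c' \<longrightarrow>
           cadj w (fst c) X Y \<and> wmax w (fst c) / (1 + \<epsilon>) \<le> cw w X Y))"
    by blast
qed

end
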